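(* Let $v\in\mathbb{M}\setminus\partial\mathbb{M}$ and $0<\epsilon<\infty$. Then there exists $w\in\partial\mathbb{M}$ with $d_{\mathrm{int}}(v,w)<\epsilon$ if and only if $\mathcal{T}_{2\epsilon}v\not\preceq Tv$.
   Context: Fix $\Lambda>0$ and an increasing homeomorphism $\varphi\colon[-\infty,\infty]\to[-\Lambda,\Lambda]$; for $s\in\mathbb{R}$ let $\rho_s\colon[-\Lambda,\Lambda]\to[-\Lambda,\Lambda]$, $\rho_s(t)=\varphi(s+\varphi^{-1}(t))$. Let $\mathbb{M}=\{(x,y)\in\mathbb{R}^2: -2\Lambda\le x+y\le2\Lambda\}$ with partial order $(x,y)\preceq(x',y')$ iff $x\ge x'$ and $y\le y'$, and boundary $\partial\mathbb{M}=\{|x+y|=2\Lambda\}$. Let $T\colon\mathbb{M}\to\mathbb{M}$, $T(x,y)=(-2\Lambda-y,2\Lambda-x)$. Put $S=(-\Lambda,\Lambda]\times[-\Lambda,\Lambda)$, $L=\{(x,y):x+y\ge-2\Lambda,\ x\le-\Lambda,\ y<\Lambda\}$, $A=\{(x,y):x+y\le2\Lambda,\ x>-\Lambda,\ y\ge\Lambda\}$; $\mathbb{M}$ is the disjoint union of the sets $T^k(S\sqcup L\sqcup A)$, $k\in\mathbb{Z}$. For $\epsilon\ge0$, $k\in\mathbb{Z}$, define $\mathcal{T}_\epsilon\colon\mathbb{M}\to\mathbb{M}$ by $\mathcal{T}_\epsilon(T^k(x,y))=T^k(\rho_{-\epsilon}(x),\rho_\epsilon(y))$ if $(x,y)\in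 S$; $=T^k(-2\Lambda-\rho_\epsilon(-2\Lambda-x),\rho_\epsilon(y))$ if $(x,y)\in L$; $=T^k(\rho_{-\epsilon}(x),2\Lambda-\rho_{-\epsilon}(2\Lambda-y))$ if $(x,y)\in A$. Let $d_{\mathrm{int}}(v,w)=\inf\{\epsilon>0: v\preceq\mathcal{T}_\epsilon w\text{ and }w\preceq\mathcal{T}_\epsilon v\}$ (infimum of empty set $=\infty$). *)

theory Defs
  imports "HOL-Analysis.Analysis"
begin

type_synonym pt = "real \<times> real"

text \<open>rho_s(t) = phi(s + phi^{-1}(t)); phi : [-inf,inf] -> [-Lambda,Lambda] as a function on ereal.\<close>
definition rho :: "(ereal \<Rightarrow> real) \<Rightarrow> real \<Rightarrow> real \<Rightarrow> real" where
  "rho \<phi> s t = \<phi> (ereal s + inv \<phi> t)"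

definition MM :: "real \<Rightarrow> pt set" where
  "MM \<Lambda> = {(x, y). -2*\<Lambda> \<le> x + y \<and> x + y \<le> 2*\<Lambda>}"

definition bdM :: "real \<Rightarrow> pt set" where
  "bdM \<Lambda> = {(x, y). \<bar>x + y\<bar> = 2*\<Lambda>}"

definition preceq :: "pt \<Rightarrow> pt \<Rightarrow> bool" where
  "preceq v w \<longleftrightarrow> fst v \<ge> fst w \<and> snd v \<le> snd w"

definition TT :: "real \<Rightarrow> pt \<Rightarrow> pt" where
  "TT \<Lambda> p = (-2*\<Lambda> - snd p, 2*\<Lambda> - fst p)"

definition TTinv :: "real \<Rightarrow> pt \<Rightarrow> pt" where
  "TTinv \<Lambda> p = (2*\<Lambda> - snd p, -2*\<Lambda> - fst p)"

definition Tpow :: "real \<Rightarrow> int \<Rightarrow> pt \<Rightarrow> pt" where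
  "Tpow \<Lambda> k = (if 0 \<le> k then TT \<Lambda> ^^ nat k else TTinv \<Lambda> ^^ nat (-k))"

definition SS :: "real \<Rightarrow> pt set" where
  "SS \<Lambda> = {-\<Lambda><..\<Lambda>} \<times> {-\<Lambda>..<\<Lambda>}"

definition LL :: "real \<Rightarrow> pt set" where
  "LL \<Lambda> = {(x, y). x + y \<ge> -2*\<Lambda> \<and> x \<le> -\<Lambda> \<and> y < \<Lambda>}"

definition AA :: "real \<Rightarrow> pt set" where
  "AA \<Lambda> = {(x, y). x + y \<le> 2*\<Lambda> \<and> x > -\<Lambda> \<and> y \<ge> \<Lambda>}"

text \<open>The map on the fundamental domain S \<union> L \<union> A.\<close>
definition base :: "real \<Rightarrow> (ereal \<Rightarrow> real) \<Rightarrow> real \<Rightarrow> pt \<Rightarrow> pt" where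
  "base \<Lambda> \<phi> \<epsilon> p =
    (let x = fst p; y = snd p in
     if p \<in> SS \<Lambda> then (rho \<phi> (-\<epsilon>) x, rho \<phi> \<epsilon> y)
     else if p \<in> LL \<Lambda> then (-2*\<Lambda> - rho \<phi> \<epsilon> (-2*\<Lambda> - x), rho \<phi> \<epsilon> y)
     else (rho \<phi> (-\<epsilon>) x, 2*\<Lambda> - rho \<phi> (-\<epsilon>) (2*\<Lambda> - y)))"

text \<open>calT_eps(T^k p) = T^k(base p) for p in S \<union> L \<union> A (the decomposition of M is disjoint).\<close>
definition calT :: "real \<Rightarrow> (ereal \<Rightarrow> real) \<Rightarrow> real \<Rightarrow> pt \<Rightarrow> pt" where
  "calT \<Lambda> \<phi> \<epsilon> v =
    (THE u. \<exists>k p. p \<in> SS \<Lambda> \<union> LL \<Lambda> \<union> AA \<Lambda> \<and> v = Tpow \<Lambda> k p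
                 \<and> u = Tpow \<Lambda> k (base \<Lambda> \<phi> \<epsilon> p))"

definition d_int :: "real \<Rightarrow> (ereal \<Rightarrow> real) \<Rightarrow> pt \<Rightarrow> pt \<Rightarrow> ereal" where
  "d_int \<Lambda> \<phi> v w = Inf {ereal e | e. e > 0 \<and> preceq v (calT \<Lambda> \<phi> e w) \<and> preceq w (calT \<Lambda> \<phi> e v)}"

end

theory Submission
  imports Defs
begin

(*
  Every power T^k commutes with \<T>, preserves \<preceq> and the boundary, and every point of M is T^k p
  for a unique p in the fundamental domain S \<union> L \<union> A.  So it suffices to treat such p, on which
  \<T>\<^sub>\<epsilon> acts coordinatewise by \<rho>\<^sub>\<epsilon> or \<rho>\<^sub>-\<^sub>\<epsilon>.

  On S one always has \<T>\<^sub>2\<^sub>\<epsilon> p \<preceq> T p, and no boundary point is \<epsilon>-close.  The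
  reflection (x, y) \<mapsto> (-y, -x), together with \<phi> \<mapsto> -\<phi>(-_), exchanges L and A, so it remains to
  treat p = (x, y) in L.  With u = -2\<Lambda> - x < y, the failure of \<T>\<^sub>2\<^sub>\<epsilon> p \<preceq> T p reads
  y < \<rho>\<^sub>2\<^sub>\<epsilon> u.  A boundary point within distance \<epsilon> of p must be a point (-2\<Lambda> - b, b) of L
  itself, and the two comparisons give y \<le> \<rho>\<^sub>e b \<le> \<rho>\<^sub>2\<^sub>e u for some e < \<epsilon>.  Conversely, if
  y < \<rho>\<^sub>2\<^sub>\<epsilon> u, the boundary point at the \<rho>-midpoint between u and y is reached from both at
  \<rho>-time less than \<epsilon>.
*)

lemma funpow_TT:
  "(TT L ^^ k) (x, y) = (if even k then (x - 2 * real k * L, y + 2 * real k * L)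
     else (- y - 2 * real k * L, - x + 2 * real k * L))"
  by (induction k) (auto simp: TT_def algebra_simps)

lemma funpow_TTinv:
  "(TTinv L ^^ k) (x, y) = (if even k then (x + 2 * real k * L, y - 2 * real k * L)
     else (- y + 2 * real k * L, - x - 2 * real k * L))"
  by (induction k) (auto simp: TTinv_def algebra_simps)

lemma Tpow_eq:
  "Tpow L n (x, y) = (if even n then (x - 2 * of_int n * L, y + 2 * of_int n * L)
     else (- y - 2 * of_int n * L, - x + 2 * of_int n * L))"
proof (cases "0 \<le> n")
  case True
  then obtain k where "n = int k" by (metis nonneg_int_cases)
  then show ?thesis by (simp add: Tpow_def funpow_TT)
next
  case False
  then obtain k where "n = - int k" by (metis neg_int_cases less_le_not_le linorder_linear)
  with False show ?thesis by (simp add: Tpow_def funpow_TTinv)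
qed

lemma Tpow_add: "Tpow L m (Tpow L n p) = Tpow L (m + n) p"
  by (cases p) (cases "even m"; cases "even n"; simp add: Tpow_eq algebra_simps)

lemma Tpow_0 [simp]: "Tpow L 0 p = p"
  by (cases p) (simp add: Tpow_eq)

lemma Tpow_1: "Tpow L 1 p = TT L p"
  by (cases p) (simp add: Tpow_eq TT_def)

lemma preceq_Tpow_iff [simp]: "preceq (Tpow L n p) (Tpow L n q) \<longleftrightarrow> preceq p q"
  by (cases p, cases q) (auto simp: Tpow_eq preceq_def)

lemma Tpow_in_bdM_iff [simp]: "Tpow L n p \<in> bdM L \<longleftrightarrow> p \<in> bdM L"
  by (cases p) (auto simp: Tpow_eq bdM_def)

lemma TT_Tpow: "TT L (Tpow L k p) = Tpow L k (TT L p)"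
  by (simp add: Tpow_1[symmetric] Tpow_add add.commute)

lemma bdM_subset_MM: "bdM L \<subseteq> MM L"
  unfolding bdM_def MM_def by auto

abbreviation fund_dom :: "real \<Rightarrow> pt set" where
  "fund_dom L \<equiv> SS L \<union> LL L \<union> AA L"

lemma TT_notin_fund_dom: "p \<in> fund_dom L \<Longrightarrow> TT L p \<notin> fund_dom L"
  by (cases p) (auto simp: TT_def SS_def LL_def AA_def)

lemma Tpow_fund_dom_eq_0:
  assumes L: "L > 0" and p: "p \<in> fund_dom L" and Tp: "Tpow L n p \<in> fund_dom L"
  shows "n = 0"
proof -
  \<comment> \<open>T raises y - x by 4 L, while y - x ranges over [-2 L, 4 L) on the fundamental domain.\<close>
  have diff_bounds: "-2 * L \<le> snd q - fst q \<and> snd q - fst q < 4 * L" if "q \<in> fund_dom L" for q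
    using that by (cases q) (auto simp: SS_def LL_def AA_def)
  have "snd (Tpow L n p) - fst (Tpow L n p) = snd p - fst p + 4 * of_int n * L"
    by (cases p) (simp add: Tpow_eq)
  with diff_bounds[OF p] diff_bounds[OF Tp]
  have upper: "of_int n * L < 2 * L" and lower: "- (2 * L) < of_int n * L" by linarith+
  from upper L have "real_of_int n < 2" by simp
  moreover have "- 2 < real_of_int n"
    using lower L mult_less_cancel_right_pos[of L "- 2" "of_int n"] by simp
  ultimately have "n < 2" "- 2 < n" by simp_all
  then consider (minus_one) "n = -1" | "n = 0" | (one) "n = 1" by linarith
  then show "n = 0"
  proof cases
    case minus_one
    then have "TT L (Tpow L n p) = p" by (simp add: Tpow_1[symmetric] Tpow_add)
    with TT_notin_fund_dom[OF Tp] p show ?thesis by simp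
  next
    case one
    with TT_notin_fund_dom[OF p] Tp show ?thesis by (simp add: Tpow_1)
  qed
qed

lemma Tpow_fund_dom_inj:
  assumes "L > 0" "p \<in> fund_dom L" "q \<in> fund_dom L" "Tpow L n p = Tpow L m q"
  shows "n = m" "p = q"
proof -
  have "Tpow L (n - m) p = q"
    using arg_cong[OF assms(4), of "Tpow L (- m)"] by (simp add: Tpow_add)
  with Tpow_fund_dom_eq_0[OF assms(1,2), of "n - m"] assms(3) show "n = m" "p = q" by auto
qed

lemma fund_dom_exists:
  assumes L: "L > 0" and v: "v \<in> MM L"
  obtains k p where "p \<in> fund_dom L" "v = Tpow L k p"
proof -
  obtain x y where v_eq: "v = (x, y)" by (cases v)
  define m where "m = \<lfloor>(y + L) / (4 * L)\<rfloor>"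
  define s where "s = of_int m * L"
  have "of_int m \<le> (y + L) / (4 * L)" "(y + L) / (4 * L) < of_int m + 1"
    unfolding m_def by linarith+
  with L have s: "4 * s \<le> y + L" "y + L < 4 * s + 4 * L"
    by (simp_all add: s_def pos_le_divide_eq pos_divide_less_eq algebra_simps)
  define v' where "v' = Tpow L (- 2 * m) v"
  have v': "v' = (x + 4 * s, y - 4 * s)"
    by (simp add: v'_def v_eq Tpow_eq s_def algebra_simps)
  have sum: "-2 * L \<le> x + y" "x + y \<le> 2 * L" using v by (auto simp: v_eq MM_def)
  have "\<exists>j. Tpow L j v' \<in> fund_dom L"
  proof -
    consider "y - 4 * s < L" "x + 4 * s \<le> -L" | "y - 4 * s < L" "-L < x + 4 * s" "x + 4 * s \<le> L"
      | (right_of_SS) "y - 4 * s < L" "x + 4 * s > L" | "y - 4 * s \<ge> L" "x + 4 * s > -L"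
      | (left_of_AA) "y - 4 * s \<ge> L" "x + 4 * s \<le> -L" by linarith
    then show ?thesis
    proof cases
      case right_of_SS
      then have "Tpow L 1 v' \<in> LL L" using sum s by (auto simp: v' Tpow_eq LL_def)
      then show ?thesis by blast
    next
      case left_of_AA
      then have "Tpow L (-1) v' \<in> SS L \<union> AA L" using sum s by (auto simp: v' Tpow_eq SS_def AA_def)
      then show ?thesis by blast
    qed (use sum s in \<open>auto simp: v' SS_def LL_def AA_def intro!: exI[of _ 0]\<close>)
  qed
  then obtain j where "Tpow L j v' \<in> fund_dom L" by blast
  moreover have "v = Tpow L (2 * m - j) (Tpow L j v')" by (simp add: v'_def Tpow_add)
  ultimately show ?thesis using that by blast
qed

lemma calT_Tpow:
  assumes "L > 0" and "p \<in> fund_dom L"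
  shows "calT L \<phi> e (Tpow L k p) = Tpow L k (base L \<phi> e p)"
  unfolding calT_def
proof (rule the_equality)
  fix u assume "\<exists>k' p'. p' \<in> fund_dom L \<and> Tpow L k p = Tpow L k' p' \<and> u = Tpow L k' (base L \<phi> e p')"
  then obtain k' p' where "p' \<in> fund_dom L" "Tpow L k p = Tpow L k' p'" "u = Tpow L k' (base L \<phi> e p')"
    by blast
  moreover from Tpow_fund_dom_inj[OF assms this(1,2)] have "k = k'" "p = p'" by simp_all
  ultimately show "u = Tpow L k (base L \<phi> e p)" by simp
qed (use assms(2) in blast)

definition mirror :: "pt \<Rightarrow> pt" where
  "mirror p = (- snd p, - fst p)"

lemma preceq_mirror_iff [simp]: "preceq (mirror p) (mirror q) \<longleftrightarrow> preceq p q"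
  by (auto simp: mirror_def preceq_def)

lemma TT_mirror: "TT L (mirror p) = mirror (TT L p)"
  by (simp add: mirror_def TT_def)

lemma Tpow_mirror: "Tpow L n (mirror p) = mirror (Tpow L n p)"
  by (cases p) (simp add: mirror_def Tpow_eq)

lemma mirror_in_SS_iff [simp]: "mirror p \<in> SS L \<longleftrightarrow> p \<in> SS L"
  by (cases p) (auto simp: mirror_def SS_def)

lemma mirror_in_LL_iff [simp]: "mirror p \<in> LL L \<longleftrightarrow> p \<in> AA L"
  by (cases p) (auto simp: mirror_def LL_def AA_def)

lemma mirror_in_AA_iff [simp]: "mirror p \<in> AA L \<longleftrightarrow> p \<in> LL L"
  by (cases p) (auto simp: mirror_def LL_def AA_def)

lemma mirror_in_bdM_iff [simp]: "mirror p \<in> bdM L \<longleftrightarrow> p \<in> bdM L"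
  by (cases p) (auto simp: mirror_def bdM_def)

lemma Tpow_cases:
  assumes "L > 0"
  obtains (zero) "n = 0"
  | (even) t where "2 * L \<le> \<bar>t\<bar>" "\<And>x y. Tpow L n (x, y) = (x - 2 * t, y + 2 * t)"
  | (odd) t where "L \<le> \<bar>t\<bar>" "\<And>x y. Tpow L n (x, y) = (- y - 2 * t, - x + 2 * t)"
proof -
  consider "n = 0" | (even_n) "even n" "2 \<le> \<bar>n\<bar>" | (odd_n) "odd n" "1 \<le> \<bar>n\<bar>"
    by (cases "n = 0"; cases "even n") (auto elim!: evenE)
  then show ?thesis
  proof cases
    case even_n
    then have "2 * L \<le> \<bar>of_int n * L\<bar>"
      using assms by (simp add: abs_mult mult_right_mono)
    with even_n that(2)[of "of_int n * L"] show ?thesis by (simp add: Tpow_eq)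
  next
    case odd_n
    then have "L \<le> \<bar>of_int n * L\<bar>"
      using assms by (simp add: abs_mult mult_right_mono)
    with odd_n that(3)[of "of_int n * L"] show ?thesis by (simp add: Tpow_eq)
  qed (use that in simp)
qed

text \<open>\<open>\<psi>\<close> is the inverse of \<open>\<phi>\<close>, and \<open>flow s\<close> is \<open>\<rho>\<^sub>s\<close>; writing it with \<open>\<psi>\<close> rather than
  \<open>inv \<phi>\<close> makes it total on the reals, so that \<open>flow_add\<close> needs no side conditions.\<close>

locale rho_flow =
  fixes L :: real and \<phi> :: "ereal \<Rightarrow> real" and \<psi> :: "real \<Rightarrow> ereal"
  assumes L_pos: "L > 0" and mono_phi: "mono \<phi>"
    and phi_range: "\<phi> z \<in> {-L..L}"
    and psi_phi [simp]: "\<psi> (\<phi> z) = z"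
    and phi_psi: "t \<in> {-L..L} \<Longrightarrow> \<phi> (\<psi> t) = t"
begin

definition flow :: "real \<Rightarrow> real \<Rightarrow> real" where
  "flow s t = \<phi> (ereal s + \<psi> t)"

lemma phi_le_iff [simp]: "\<phi> z \<le> \<phi> z' \<longleftrightarrow> z \<le> z'"
  by (metis linorder_le_cases monoD mono_phi order_antisym psi_phi)

lemma phi_less_iff [simp]: "\<phi> z < \<phi> z' \<longleftrightarrow> z < z'"
  by (meson linorder_not_le phi_le_iff)

lemma phi_PInf: "\<phi> \<infinity> = L"
  using phi_range[of \<infinity>] phi_le_iff[of "\<psi> L" \<infinity>] phi_psi[of L] L_pos by simp

lemma phi_MInf: "\<phi> (- \<infinity>) = - L"
  using phi_range[of "- \<infinity>"] phi_le_iff[of "- \<infinity>" "\<psi> (- L)"] phi_psi[of "- L"] L_pos by simp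

lemma phi_ereal_bounds: "- L < \<phi> (ereal c)" "\<phi> (ereal c) < L"
  using phi_less_iff[of "- \<infinity>" "ereal c"] phi_less_iff[of "ereal c" \<infinity>] by (simp_all add: phi_PInf phi_MInf)

lemma interior_eq_phi_ereal:
  assumes "- L < t" "t < L"
  obtains c where "t = \<phi> (ereal c)"
proof -
  have "\<psi> t \<noteq> \<infinity>" "\<psi> t \<noteq> - \<infinity>"
    using assms phi_psi[of t] phi_PInf phi_MInf by auto
  then obtain c where "\<psi> t = ereal c" by (cases "\<psi> t") auto
  with assms phi_psi[of t] have "t = \<phi> (ereal c)" by simp
  then show ?thesis by (rule that)
qed

lemma rho_eq_flow: "t \<in> {-L..L} \<Longrightarrow> rho \<phi> s t = flow s t"
  by (metis rho_def flow_def inv_f_f phi_psi psi_phi injI)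

lemma flow_range: "- L \<le> flow s t" "flow s t \<le> L"
  using phi_range unfolding flow_def by auto

lemma flow_add: "flow s (flow r t) = flow (s + r) t"
  by (simp add: flow_def add.assoc[symmetric])

lemma flow_0: "t \<in> {-L..L} \<Longrightarrow> flow 0 t = t"
  by (simp add: flow_def phi_psi zero_ereal_def[symmetric])

lemma flow_mono:
  assumes "t \<in> {-L..L}" "t' \<in> {-L..L}" "t \<le> t'"
  shows "flow s t \<le> flow s t'"
proof -
  have "\<psi> t \<le> \<psi> t'" using assms phi_le_iff[of "\<psi> t" "\<psi> t'"] by (simp add: phi_psi)
  then show ?thesis by (simp add: flow_def add_left_mono)
qed

lemma flow_mono_time: "s \<le> s' \<Longrightarrow> flow s t \<le> flow s' t"
  by (simp add: flow_def add_right_mono)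

lemma flow_ge: "0 \<le> s \<Longrightarrow> t \<in> {-L..L} \<Longrightarrow> t \<le> flow s t"
  using flow_mono_time[of 0 s t] flow_0 by simp

lemma flow_phi_ereal: "flow s (\<phi> (ereal c)) = \<phi> (ereal (s + c))"
  by (simp add: flow_def)

lemma flow_L [simp]: "flow s L = L"
  using psi_phi[of \<infinity>] by (simp add: flow_def phi_PInf)

lemma flow_neg_L [simp]: "flow s (- L) = - L"
  using psi_phi[of "- \<infinity>"] by (simp add: flow_def phi_MInf)

lemma flow_less_L:
  assumes "- L \<le> t" "t < L"
  shows "flow s t < L"
proof (cases "t = - L")
  case False
  with assms obtain c where "t = \<phi> (ereal c)" by (metis interior_eq_phi_ereal order_le_less)
  then show ?thesis by (simp add: flow_phi_ereal phi_ereal_bounds)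
qed (use L_pos in simp)

lemma neg_L_less_flow:
  assumes "- L < t" "t \<le> L"
  shows "- L < flow s t"
proof (cases "t = L")
  case False
  with assms obtain c where "t = \<phi> (ereal c)" by (metis interior_eq_phi_ereal order_le_less)
  then show ?thesis by (simp add: flow_phi_ereal phi_ereal_bounds)
qed (use L_pos in simp)

lemma flow_strict_mono_time:
  assumes "- L < t" "t < L" "s < s'"
  shows "flow s t < flow s' t"
proof -
  obtain c where "t = \<phi> (ereal c)" using interior_eq_phi_ereal assms(1,2) .
  with assms(3) show ?thesis by (simp add: flow_phi_ereal)
qed

lemma base_SS: "(x, y) \<in> SS L \<Longrightarrow> base L \<phi> e (x, y) = (flow (- e) x, flow e y)"
  by (simp add: base_def SS_def rho_eq_flow)

lemma base_LL:
  "(x, y) \<in> LL L \<Longrightarrow> base L \<phi> e (x, y) = (- 2 * L - flow e (- 2 * L - x), flow e y)"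
  using L_pos by (auto simp: base_def SS_def LL_def rho_eq_flow)

lemma base_AA:
  "(x, y) \<in> AA L \<Longrightarrow> base L \<phi> e (x, y) = (flow (- e) x, 2 * L - flow (- e) (2 * L - y))"
  using L_pos by (auto simp: base_def SS_def LL_def AA_def rho_eq_flow)

lemma base_bounds:
  assumes "p \<in> fund_dom L"
  shows "- 3 * L \<le> fst (base L \<phi> e p)" and "snd (base L \<phi> e p) < 3 * L"
    and "p \<notin> LL L \<Longrightarrow> - L < fst (base L \<phi> e p)"
proof -
  obtain x y where p: "p = (x, y)" by (cases p)
  from assms consider (in_SS) "(x, y) \<in> SS L" | (in_LL) "(x, y) \<in> LL L" | (in_AA) "(x, y) \<in> AA L"
    by (auto simp: p)
  then have "- 3 * L \<le> fst (base L \<phi> e p) \<and> snd (base L \<phi> e p) < 3 * L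
      \<and> (p \<notin> LL L \<longrightarrow> - L < fst (base L \<phi> e p))"
  proof cases
    case in_SS
    then have "- L < x" "x \<le> L" by (auto simp: SS_def)
    with in_SS show ?thesis
      using neg_L_less_flow[of x "- e"] flow_range[of e y] L_pos by (simp add: p base_SS)
  next
    case in_LL
    then show ?thesis
      using flow_range[of e y] flow_range[of e "- 2 * L - x"] L_pos by (simp add: p base_LL)
  next
    case in_AA
    then have "- L < x" "x \<le> L" "- L < 2 * L - y" "2 * L - y \<le> L" by (auto simp: AA_def)
    with in_AA show ?thesis
      using neg_L_less_flow[of x "- e"] neg_L_less_flow[of "2 * L - y" "- e"] L_pos by (simp add: p base_AA)
  qed
  then show "- 3 * L \<le> fst (base L \<phi> e p)" "snd (base L \<phi> e p) < 3 * L"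
    "p \<notin> LL L \<Longrightarrow> - L < fst (base L \<phi> e p)" by blast+
qed

lemma base_SS_preceq_TT: "p \<in> SS L \<Longrightarrow> preceq (base L \<phi> e p) (TT L p)"
  using flow_range[of "- e" "fst p"] flow_range[of e "snd p"]
  by (cases p) (auto simp: base_SS TT_def preceq_def SS_def)

lemma preceq_base_TT_LL_iff:
  "(x, y) \<in> LL L \<Longrightarrow> preceq (base L \<phi> e (x, y)) (TT L (x, y)) \<longleftrightarrow> flow e (- 2 * L - x) \<le> y"
  using flow_range[of e y] by (auto simp: base_LL TT_def preceq_def LL_def)

lemma boundary_partner_LL:
  assumes p: "p \<in> fund_dom L" and q: "(- 2 * L - b, b) \<in> LL L"
    and c1: "preceq p (Tpow L n (base L \<phi> e (- 2 * L - b, b)))"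
    and c2: "preceq (Tpow L n (- 2 * L - b, b)) (base L \<phi> e p)"
  shows "n = 0" and "p \<in> LL L"
proof -
  obtain x y where p_eq: "p = (x, y)" by (cases p)
  have b: "- L \<le> b" "b < L" using q by (auto simp: LL_def)
  define \<beta> where "\<beta> = flow e b"
  have \<beta>: "\<beta> < L" using b flow_less_L by (simp add: \<beta>_def)
  have base_q: "base L \<phi> e (- 2 * L - b, b) = (- 2 * L - \<beta>, \<beta>)"
    using base_LL[OF q] by (simp add: \<beta>_def)
  have xy: "- L \<le> y" "x \<le> L" using p by (auto simp: p_eq SS_def LL_def AA_def)
  note bounds = base_bounds[OF p, of e]
  have "n = 0 \<and> p \<in> LL L"
  proof (cases rule: Tpow_cases[OF L_pos, of n, case_names zero even odd])
    case zero
    with c2 bounds(3) b show ?thesis by (auto simp: preceq_def)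
  next
    case (even t)
    with c1[unfolded base_q] c2 bounds(1) b \<beta> xy show ?thesis
      by (auto simp: p_eq preceq_def abs_if split: if_splits)
  next
    case (odd t)
    with c1[unfolded base_q] c2 bounds(2) b \<beta> xy show ?thesis
      by (auto simp: p_eq preceq_def abs_if split: if_splits)
  qed
  then show "n = 0" "p \<in> LL L" by blast+
qed

lemma LL_bdM_eq: "q \<in> LL L \<Longrightarrow> q \<in> bdM L \<Longrightarrow> q = (- 2 * L - snd q, snd q)"
  by (cases q) (auto simp: LL_def bdM_def abs_if split: if_splits)

lemma near_boundary_LL:
  assumes p: "p \<in> fund_dom L" "p \<notin> bdM L" and e: "e < \<epsilon>"
    and q: "q \<in> LL L" "q \<in> bdM L"
    and c1: "preceq p (Tpow L n (base L \<phi> e q))" and c2: "preceq (Tpow L n q) (base L \<phi> e p)"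
  shows "\<not> preceq (base L \<phi> (2 * \<epsilon>) p) (TT L p)"
proof -
  obtain a b where q_eq: "q = (a, b)" by (cases q)
  have a: "a = - 2 * L - b" using LL_bdM_eq[OF q] by (simp add: q_eq)
  have b: "b \<in> {-L..L}" using q by (auto simp: q_eq LL_def)
  have "n = 0" and pL: "p \<in> LL L"
    using boundary_partner_LL[OF p(1)] q c1 c2 by (simp_all add: q_eq a)
  obtain x y where p_eq: "p = (x, y)" by (cases p)
  define u where "u = - 2 * L - x"
  have u: "u \<in> {-L..L}" "u < y" "y < L"
    using pL p(2) by (auto simp: p_eq u_def LL_def bdM_def)
  have "base L \<phi> e q = (- 2 * L - flow e b, flow e b)"
    using base_LL[OF q(1)[unfolded q_eq]] by (simp add: q_eq a)
  with c1 c2 have "y \<le> flow e b" "b \<le> flow e u"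
    by (simp_all add: \<open>n = 0\<close> p_eq q_eq base_LL[OF pL[unfolded p_eq]] preceq_def u_def a)
  then have "y \<le> flow e (flow e u)"
    using flow_mono[of b "flow e u" e] b flow_range[of e u] by force
  then have y_le: "y \<le> flow (2 * e) u" by (simp add: flow_add)
  then have "- L < u" using u by (cases "u = - L") auto
  then have "flow (2 * e) u < flow (2 * \<epsilon>) u"
    using u y_le flow_less_L[of y] e by (intro flow_strict_mono_time) auto
  with y_le show ?thesis
    using pL by (simp add: p_eq preceq_base_TT_LL_iff u_def)
qed

lemma boundary_witness_LL:
  assumes p: "p \<in> LL L" "p \<notin> bdM L" and not_preceq: "\<not> preceq (base L \<phi> (2 * \<epsilon>) p) (TT L p)"
  obtains h q where "0 < h" "h < \<epsilon>" "q \<in> LL L" "q \<in> bdM L"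
    "preceq p (base L \<phi> h q)" "preceq q (base L \<phi> h p)"
proof -
  obtain x y where p_eq: "p = (x, y)" by (cases p)
  define u where "u = - 2 * L - x"
  have u: "- L \<le> u" "u < y" "y < L"
    using p by (auto simp: p_eq u_def LL_def bdM_def)
  have y_less: "y < flow (2 * \<epsilon>) u"
    using not_preceq p(1) by (simp add: p_eq preceq_base_TT_LL_iff u_def)
  then have "u \<noteq> - L" using u by auto
  with u obtain c b where c: "u = \<phi> (ereal c)" and b: "y = \<phi> (ereal b)"
    by (metis interior_eq_phi_ereal order_le_less less_trans)
  have "c < b" "b < 2 * \<epsilon> + c"
    using u(2) y_less by (simp_all add: c b flow_phi_ereal)
  define h where "h = (b - c) / 2"
  define w where "w = \<phi> (ereal ((b + c) / 2))"
  define q where "q = (- 2 * L - w, w)"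
  have w: "- L < w" "w < L" by (simp_all add: w_def phi_ereal_bounds)
  have q: "q \<in> LL L" "q \<in> bdM L" using w L_pos by (auto simp: q_def LL_def bdM_def)
  have "flow h w = y" "flow h u = w"
    by (simp_all add: w_def b c h_def flow_phi_ereal field_simps)
  then have base_q: "base L \<phi> h q = (- 2 * L - y, y)"
    and base_p: "base L \<phi> h p = (- 2 * L - w, flow h y)"
    using base_LL q(1) p(1) by (simp_all add: q_def p_eq u_def)
  show ?thesis
  proof (rule that)
    show "0 < h" "h < \<epsilon>" using \<open>c < b\<close> \<open>b < 2 * \<epsilon> + c\<close> by (simp_all add: h_def)
    show "preceq p (base L \<phi> h q)"
      using p(1) by (simp add: base_q p_eq preceq_def LL_def)
    have "w \<le> y" using \<open>c < b\<close> by (simp add: w_def b)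
    also have "y \<le> flow h y" using \<open>c < b\<close> u by (intro flow_ge) (auto simp: h_def)
    finally show "preceq q (base L \<phi> h p)"
      by (simp add: base_p q_def preceq_def)
  qed (use q in auto)
qed

lemma rho_flow_mirror: "rho_flow L (\<lambda>z. - \<phi> (- z)) (\<lambda>t. - \<psi> (- t))"
proof
  show "mono (\<lambda>z. - \<phi> (- z))" by (rule monoI) simp
  show "- \<phi> (- z) \<in> {-L..L}" for z using phi_range[of "- z"] by auto
  show "t \<in> {-L..L} \<Longrightarrow> - \<phi> (- (- \<psi> (- t))) = t" for t using phi_psi[of "- t"] by simp
qed (simp_all add: L_pos)

lemma flow_mirror: "rho_flow.flow (\<lambda>z. - \<phi> (- z)) (\<lambda>t. - \<psi> (- t)) s t = - flow (- s) (- t)"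
proof -
  interpret m: rho_flow L "\<lambda>z. - \<phi> (- z)" "\<lambda>t. - \<psi> (- t)" by (rule rho_flow_mirror)
  have "- (ereal s + - \<psi> (- t)) = ereal (- s) + \<psi> (- t)" by (cases "\<psi> (- t)") auto
  then show ?thesis by (simp add: m.flow_def flow_def)
qed

lemma base_mirror:
  assumes "p \<in> fund_dom L"
  shows "base L (\<lambda>z. - \<phi> (- z)) e (mirror p) = mirror (base L \<phi> e p)"
proof -
  interpret m: rho_flow L "\<lambda>z. - \<phi> (- z)" "\<lambda>t. - \<psi> (- t)" by (rule rho_flow_mirror)
  obtain x y where p: "p = (x, y)" by (cases p)
  have mp: "mirror p = (- y, - x)" by (simp add: p mirror_def)
  from assms consider (in_SS) "p \<in> SS L" | (in_LL) "p \<in> LL L" | (in_AA) "p \<in> AA L" by blast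
  then show ?thesis
  proof cases
    case in_SS
    with mirror_in_SS_iff[of p L] show ?thesis
      by (simp add: mp p base_SS m.base_SS flow_mirror mirror_def)
  next
    case in_LL
    with mirror_in_AA_iff[of p L] show ?thesis
      by (simp add: mp p base_LL m.base_AA flow_mirror mirror_def)
  next
    case in_AA
    with mirror_in_LL_iff[of p L] show ?thesis
      by (simp add: mp p base_AA m.base_LL flow_mirror mirror_def)
  qed
qed

lemma near_boundary_iff:
  assumes p: "p \<in> fund_dom L" "p \<notin> bdM L"
  shows "(\<exists>e q n. 0 < e \<and> e < \<epsilon> \<and> q \<in> fund_dom L \<and> q \<in> bdM L
            \<and> preceq p (Tpow L n (base L \<phi> e q)) \<and> preceq (Tpow L n q) (base L \<phi> e p))
         \<longleftrightarrow> \<not> preceq (base L \<phi> (2 * \<epsilon>) p) (TT L p)"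
proof -
  interpret m: rho_flow L "\<lambda>z. - \<phi> (- z)" "\<lambda>t. - \<psi> (- t)" by (rule rho_flow_mirror)
  have mp: "mirror p \<in> fund_dom L" "mirror p \<notin> bdM L" using p by auto
  show ?thesis
  proof
    assume "\<exists>e q n. 0 < e \<and> e < \<epsilon> \<and> q \<in> fund_dom L \<and> q \<in> bdM L
            \<and> preceq p (Tpow L n (base L \<phi> e q)) \<and> preceq (Tpow L n q) (base L \<phi> e p)"
    then obtain e q n where e: "e < \<epsilon>" and q: "q \<in> fund_dom L" "q \<in> bdM L"
      and c1: "preceq p (Tpow L n (base L \<phi> e q))" and c2: "preceq (Tpow L n q) (base L \<phi> e p)"
      by blast
    have "q \<notin> SS L" using q(2) by (cases q) (auto simp: SS_def bdM_def)
    with q(1) consider (LL) "q \<in> LL L" | (AA) "q \<in> AA L" by blast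
    then show "\<not> preceq (base L \<phi> (2 * \<epsilon>) p) (TT L p)"
    proof cases
      case LL
      with near_boundary_LL[OF p e] q c1 c2 show ?thesis by blast
    next
      case AA
      have "\<not> preceq (base L (\<lambda>z. - \<phi> (- z)) (2 * \<epsilon>) (mirror p)) (TT L (mirror p))"
      proof (rule m.near_boundary_LL[OF mp e])
        show "mirror q \<in> LL L" "mirror q \<in> bdM L" using AA q by auto
        show "preceq (mirror p) (Tpow L n (base L (\<lambda>z. - \<phi> (- z)) e (mirror q)))"
          using c1 q(1) by (simp add: base_mirror Tpow_mirror)
        show "preceq (Tpow L n (mirror q)) (base L (\<lambda>z. - \<phi> (- z)) e (mirror p))"
          using c2 p(1) by (simp add: base_mirror Tpow_mirror)
      qed
      then show ?thesis using p(1) by (simp add: base_mirror TT_mirror)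
    qed
  next
    assume not_preceq: "\<not> preceq (base L \<phi> (2 * \<epsilon>) p) (TT L p)"
    then have "p \<notin> SS L" using base_SS_preceq_TT by blast
    with p(1) consider (LL) "p \<in> LL L" | (AA) "p \<in> AA L" by blast
    then show "\<exists>e q n. 0 < e \<and> e < \<epsilon> \<and> q \<in> fund_dom L \<and> q \<in> bdM L
            \<and> preceq p (Tpow L n (base L \<phi> e q)) \<and> preceq (Tpow L n q) (base L \<phi> e p)"
    proof cases
      case LL
      obtain h q where "0 < h" "h < \<epsilon>" "q \<in> LL L" "q \<in> bdM L"
        "preceq p (base L \<phi> h q)" "preceq q (base L \<phi> h p)"
        by (rule boundary_witness_LL[OF LL p(2) not_preceq])
      then show ?thesis by (intro exI[of _ h] exI[of _ q] exI[of _ 0]) auto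
    next
      case AA
      have "\<not> preceq (base L (\<lambda>z. - \<phi> (- z)) (2 * \<epsilon>) (mirror p)) (TT L (mirror p))"
        using not_preceq p(1) by (simp add: base_mirror TT_mirror)
      moreover have "mirror p \<in> LL L" using AA by simp
      ultimately obtain h q' where
        "0 < h" "h < \<epsilon>" "q' \<in> LL L" "q' \<in> bdM L"
        "preceq (mirror p) (base L (\<lambda>z. - \<phi> (- z)) h q')"
        "preceq q' (base L (\<lambda>z. - \<phi> (- z)) h (mirror p))"
        using m.boundary_witness_LL mp(2) by blast
      define q where "q = mirror q'"
      have q': "q' = mirror q" by (simp add: q_def mirror_def)
      have q: "q \<in> AA L" "q \<in> bdM L" using \<open>q' \<in> LL L\<close> \<open>q' \<in> bdM L\<close> by (simp_all add: q')
      have "preceq p (base L \<phi> h q)" "preceq q (base L \<phi> h p)"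
        using \<open>preceq (mirror p) _\<close> \<open>preceq q' _\<close> q(1) p(1) by (simp_all add: q' base_mirror)
      with \<open>0 < h\<close> \<open>h < \<epsilon>\<close> q show ?thesis by (intro exI[of _ h] exI[of _ q] exI[of _ 0]) auto
    qed
  qed
qed

end

lemma rho_flow_of_homeomorphism:
  "L > 0 \<Longrightarrow> mono \<phi> \<Longrightarrow> homeomorphism UNIV {-L..L} \<phi> \<psi> \<Longrightarrow> rho_flow L \<phi> \<psi>"
  by unfold_locales (auto simp: homeomorphism_def)

lemma d_int_less_iff:
  "d_int L \<phi> v w < ereal \<epsilon>
     \<longleftrightarrow> (\<exists>e. 0 < e \<and> e < \<epsilon> \<and> preceq v (calT L \<phi> e w) \<and> preceq w (calT L \<phi> e v))"
  by (auto simp: d_int_def Inf_less_iff)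

lemma exists_bdM_d_int_less_iff:
  assumes L: "L > 0" and p: "p \<in> fund_dom L"
  shows "(\<exists>w \<in> bdM L. d_int L \<phi> (Tpow L k p) w < ereal \<epsilon>)
    \<longleftrightarrow> (\<exists>e q n. 0 < e \<and> e < \<epsilon> \<and> q \<in> fund_dom L \<and> q \<in> bdM L
            \<and> preceq p (Tpow L n (base L \<phi> e q)) \<and> preceq (Tpow L n q) (base L \<phi> e p))"
proof
  assume "\<exists>w \<in> bdM L. d_int L \<phi> (Tpow L k p) w < ereal \<epsilon>"
  then obtain w e where w: "w \<in> bdM L" and e: "0 < e" "e < \<epsilon>"
    and c1: "preceq (Tpow L k p) (calT L \<phi> e w)" and c2: "preceq w (calT L \<phi> e (Tpow L k p))"
    by (auto simp: d_int_less_iff)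
  from w obtain j q where q: "q \<in> fund_dom L" and w_eq: "w = Tpow L j q"
    using fund_dom_exists[OF L] bdM_subset_MM by blast
  have shift: "Tpow L j z = Tpow L k (Tpow L (j - k) z)" for z by (simp add: Tpow_add)
  have "preceq (Tpow L k p) (Tpow L j (base L \<phi> e q))" "preceq (Tpow L j q) (Tpow L k (base L \<phi> e p))"
    using c1 c2 p q by (simp_all add: w_eq calT_Tpow[OF L])
  then have "preceq p (Tpow L (j - k) (base L \<phi> e q))" "preceq (Tpow L (j - k) q) (base L \<phi> e p)"
    by (simp_all only: shift preceq_Tpow_iff)
  moreover have "q \<in> bdM L" using w by (simp add: w_eq)
  ultimately show "\<exists>e q n. 0 < e \<and> e < \<epsilon> \<and> q \<in> fund_dom L \<and> q \<in> bdM L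
            \<and> preceq p (Tpow L n (base L \<phi> e q)) \<and> preceq (Tpow L n q) (base L \<phi> e p)"
    using e q by blast
next
  assume "\<exists>e q n. 0 < e \<and> e < \<epsilon> \<and> q \<in> fund_dom L \<and> q \<in> bdM L
            \<and> preceq p (Tpow L n (base L \<phi> e q)) \<and> preceq (Tpow L n q) (base L \<phi> e p)"
  then obtain e q n where "0 < e" "e < \<epsilon>" "q \<in> fund_dom L" "q \<in> bdM L"
    "preceq p (Tpow L n (base L \<phi> e q))" "preceq (Tpow L n q) (base L \<phi> e p)"
    by blast
  moreover have "calT L \<phi> e (Tpow L k (Tpow L n q)) = Tpow L k (Tpow L n (base L \<phi> e q))"
    by (simp add: calT_Tpow[OF L \<open>q \<in> fund_dom L\<close>] Tpow_add)
  moreover have "calT L \<phi> e (Tpow L k p) = Tpow L k (base L \<phi> e p)" by (rule calT_Tpow[OF L p])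
  ultimately have "d_int L \<phi> (Tpow L k p) (Tpow L k (Tpow L n q)) < ereal \<epsilon>"
    by (auto simp: d_int_less_iff intro!: exI[of _ e])
  moreover have "Tpow L k (Tpow L n q) \<in> bdM L" using \<open>q \<in> bdM L\<close> by simp
  ultimately show "\<exists>w \<in> bdM L. d_int L \<phi> (Tpow L k p) w < ereal \<epsilon>" by blast
qed

theorem proposition7p5:
  fixes \<Lambda> :: real and \<phi> :: "ereal \<Rightarrow> real" and v :: "real \<times> real" and \<epsilon> :: real
  assumes "\<Lambda> > 0"
    and "mono \<phi>"
    and "\<exists>\<psi>. homeomorphism UNIV {-\<Lambda>..\<Lambda>} \<phi> \<psi>"
    and "v \<in> MM \<Lambda>" and "v \<notin> bdM \<Lambda>"
    and "0 < \<epsilon>"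
  shows "(\<exists>w \<in> bdM \<Lambda>. d_int \<Lambda> \<phi> v w < ereal \<epsilon>)
         \<longleftrightarrow> \<not> preceq (calT \<Lambda> \<phi> (2*\<epsilon>) v) (TT \<Lambda> v)"
proof -
  obtain \<psi> where "homeomorphism UNIV {-\<Lambda>..\<Lambda>} \<phi> \<psi>" using assms(3) by blast
  then interpret rho_flow \<Lambda> \<phi> \<psi> using assms(1,2) by (intro rho_flow_of_homeomorphism)
  obtain k p where p: "p \<in> fund_dom \<Lambda>" and v: "v = Tpow \<Lambda> k p"
    using fund_dom_exists[OF assms(1,4)] .
  have "p \<notin> bdM \<Lambda>" using assms(5) by (simp add: v)
  have "(\<exists>w \<in> bdM \<Lambda>. d_int \<Lambda> \<phi> v w < ereal \<epsilon>)
    \<longleftrightarrow> (\<exists>e q n. 0 < e \<and> e < \<epsilon> \<and> q \<in> fund_dom \<Lambda> \<and> q \<in> bdM \<Lambda>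
            \<and> preceq p (Tpow \<Lambda> n (base \<Lambda> \<phi> e q)) \<and> preceq (Tpow \<Lambda> n q) (base \<Lambda> \<phi> e p))"
    unfolding v by (rule exists_bdM_d_int_less_iff[OF assms(1) p])
  also have "\<dots> \<longleftrightarrow> \<not> preceq (base \<Lambda> \<phi> (2 * \<epsilon>) p) (TT \<Lambda> p)"
    by (rule near_boundary_iff[OF p \<open>p \<notin> bdM \<Lambda>\<close>])
  also have "\<dots> \<longleftrightarrow> \<not> preceq (calT \<Lambda> \<phi> (2 * \<epsilon>) v) (TT \<Lambda> v)"
    by (simp add: v calT_Tpow[OF assms(1) p] TT_Tpow)
  finally show ?thesis .
qed

end
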